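(* Let $(J,S)$ be a homogeneous $d$-dimensional multi-time Markov renewal chain with semi-Markov kernel $q$ and sojourn times $(X_n)$. Let $\phi:\mathbb{N}^d\to\mathbb{N}$ be a function, $\Phi_n:=\phi(X_n)$ and $S^{[\phi]}_n:=\sum_{k=0}^n\Phi_k$, $n\ge0$. Then $(J,S^{[\phi]})$ is a Markov renewal chain with interjump times $(\Phi_n)_{n\ge1}$, i.e. for all $n$, $j\in E$, $k\in\mathbb{N}$, a.s. $\mathbb{P}(J_{n+1}=j,S^{[\phi]}_{n+1}-S^{[\phi]}_n=k\mid J_{0:n},S^{[\phi]}_{0:n})=q^{[\phi]}_{J_nj}(k)$, with semi-Markov kernel $$q^{[\phi]}_{ij}(k)=\sum_{v\in\mathbb{N}^d:\ \phi(v)=k}q_{ij}(v),\qquad i,j\in E,\ k\in\mathbb{N}.$$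
   Context: $E=\{1,\dots,s\}$. $\mathbb{N}^d$ carries the partial order $k\le l$ iff $k_u\le l_u$ for all $u$, and $k<l$ iff $k\le l$, $k\ne l$. A homogeneous $d$-dimensional multi-time Markov renewal chain is a process $(J_n,S_n)_{n\in\mathbb{N}}$, $J_n\in E$, $S_n\in\mathbb{N}^d$, $S_0=0_d$, $S_n<S_{n+1}$, such that a.s. $\mathbb{P}(J_{n+1}=j,S_{n+1}-S_n=k\mid J_{0:n},S_{0:n})=q_{J_nj}(k)$ where $q_{ij}(k)=\mathbb{P}(J_{n+1}=j,S_{n+1}-S_n=k\mid J_n=i)$ does not depend on $n$ (the semi-Markov kernel). Sojourn times: $X_0=0_d$, $X_n=S_n-S_{n-1}$ for $n\ge1$. *)

theory Defs
  imports "HOL-Probability.Probability" "HOL-Library.Function_Algebras"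
begin

text \<open>Points of N^d are functions 'd => nat (with 'd a finite index type, d = CARD('d));
  the order on functions is pointwise, so k \<le> l and k < l are the partial orders of the paper.\<close>

definition hist_alg :: "'a measure \<Rightarrow> (nat \<Rightarrow> 'a \<Rightarrow> 'b) \<Rightarrow> (nat \<Rightarrow> 'a \<Rightarrow> 'c) \<Rightarrow> nat \<Rightarrow> 'a measure" where
  "hist_alg M Y T n = vimage_algebra (space M)
     (\<lambda>\<omega>. (map (\<lambda>i. Y i \<omega>) [0..<Suc n], map (\<lambda>i. T i \<omega>) [0..<Suc n])) (count_space UNIV)"

definition multi_time_MRC ::
  "'a measure \<Rightarrow> nat \<Rightarrow> (nat \<Rightarrow> nat \<Rightarrow> ('d::finite \<Rightarrow> nat) \<Rightarrow> real)
   \<Rightarrow> (nat \<Rightarrow> 'a \<Rightarrow> nat) \<Rightarrow> (nat \<Rightarrow> 'a \<Rightarrow> ('d \<Rightarrow> nat)) \<Rightarrow> bool" where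
  "multi_time_MRC M s q J S \<longleftrightarrow>
     prob_space M \<and>
     (\<forall>n. J n \<in> measurable M (count_space UNIV)) \<and>
     (\<forall>n. S n \<in> measurable M (count_space UNIV)) \<and>
     (\<forall>n. \<forall>\<omega>\<in>space M. J n \<omega> \<in> {1..s}) \<and>
     (\<forall>\<omega>\<in>space M. S 0 \<omega> = 0) \<and>
     (\<forall>n. \<forall>\<omega>\<in>space M. S n \<omega> < S (Suc n) \<omega>) \<and>
     (\<forall>n j k. j \<in> {1..s} \<longrightarrow>
        (AE \<omega> in M. real_cond_exp M (hist_alg M J S n)
            (indicator {\<omega>\<in>space M. J (Suc n) \<omega> = j \<and> S (Suc n) \<omega> - S n \<omega> = k}) \<omega>
          = q (J n \<omega>) j k))"

definition sojourn :: "(nat \<Rightarrow> 'a \<Rightarrow> ('d \<Rightarrow> nat)) \<Rightarrow> nat \<Rightarrow> 'a \<Rightarrow> ('d \<Rightarrow> nat)" where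
  "sojourn S n \<omega> = (if n = 0 then 0 else S n \<omega> - S (n - 1) \<omega>)"

definition phi_time :: "(('d \<Rightarrow> nat) \<Rightarrow> nat) \<Rightarrow> (nat \<Rightarrow> 'a \<Rightarrow> ('d \<Rightarrow> nat)) \<Rightarrow> nat \<Rightarrow> 'a \<Rightarrow> nat" where
  "phi_time \<phi> S n \<omega> = (\<Sum>k\<le>n. \<phi> (sojourn S k \<omega>))"

definition phi_kernel :: "(nat \<Rightarrow> nat \<Rightarrow> ('d \<Rightarrow> nat) \<Rightarrow> real) \<Rightarrow> (('d \<Rightarrow> nat) \<Rightarrow> nat) \<Rightarrow> nat \<Rightarrow> nat \<Rightarrow> nat \<Rightarrow> real" where
  "phi_kernel q \<phi> i j k = (\<Sum>\<^sub>\<infinity>v\<in>{v. \<phi> v = k}. q i j v)"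

end

theory Submission
  imports Defs
begin

(* The history of (J, S^[phi]) up to time n is a function of the history of (J, S), so the
   sigma-algebra F' it generates is contained in F = sigma(J_0..J_n, S_0..S_n), and J_n is
   F'-measurable. The event {J_(n+1) = j, S^[phi]_(n+1) - S^[phi]_n = k} is the disjoint union,
   over the countably many v with phi v = k, of the events {J_(n+1) = j, X_(n+1) = v}. For every
   B in F contained in {J_n = i} the Markov renewal property gives
   P(B \<inter> {J_(n+1) = j, X_(n+1) = v}) = q_ij(v) P(B), and countable additivity turns this into
   q^[phi]_ij(k) P(B) for the union. Since J_n takes only finitely many values, these identities
   on the sets of F' inside the strata {J_n = i} characterise the conditional expectation given F'. *)

lemma (in finite_measure) has_sum_measure_disjoint_UN:
  fixes X :: "'i::countable \<Rightarrow> 'a set"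
  assumes sets: "\<And>i. i \<in> V \<Longrightarrow> X i \<in> sets M" and disj: "disjoint_family_on X V"
  shows "((\<lambda>i. measure M (X i)) has_sum measure M (\<Union>i\<in>V. X i)) V"
proof -
  define Y where "Y n = (if n \<in> to_nat ` V then X (from_nat n) else {})" for n
  have "range Y \<subseteq> sets M"
    using sets by (auto simp: Y_def)
  moreover have "disjoint_family Y"
    using disj unfolding disjoint_family_on_def Y_def by (auto simp: from_nat_to_nat) blast
  moreover have "(\<Union>n. Y n) = (\<Union>i\<in>V. X i)"
    by (auto simp: Y_def from_nat_to_nat split: if_splits)
  ultimately have "(\<lambda>n. measure M (Y n)) sums measure M (\<Union>i\<in>V. X i)"
    using measure_UNION[of Y M] by simp
  then have "((\<lambda>n. measure M (Y n)) has_sum measure M (\<Union>i\<in>V. X i)) UNIV"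
    by (rule sums_nonneg_imp_has_sum) simp
  then have "((\<lambda>n. measure M (X (from_nat n))) has_sum measure M (\<Union>i\<in>V. X i)) (to_nat ` V)"
    by (rule has_sum_cong_neutral[THEN iffD1, rotated -1]) (auto simp: Y_def)
  then show ?thesis
    by (simp add: has_sum_reindex o_def)
qed

lemma (in finite_measure) measure_Int_UN_eq_infsum:
  fixes A :: "'i::countable \<Rightarrow> 'a set"
  assumes "\<And>v. v \<in> V \<Longrightarrow> A v \<in> sets M" "disjoint_family_on A V" "B \<in> sets M"
    and "\<And>v. v \<in> V \<Longrightarrow> measure M (B \<inter> A v) = c v * measure M B"
  shows "measure M (B \<inter> (\<Union>v\<in>V. A v)) = (\<Sum>\<^sub>\<infinity>v\<in>V. c v) * measure M B"
proof -
  have "((\<lambda>v. measure M (B \<inter> A v)) has_sum measure M (B \<inter> (\<Union>v\<in>V. A v))) V"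
    unfolding Int_UN_distrib using assms(1-3)
    by (intro has_sum_measure_disjoint_UN) (auto simp: disjoint_family_on_def)
  then have "((\<lambda>v. c v * measure M B) has_sum measure M (B \<inter> (\<Union>v\<in>V. A v))) V"
    by (rule has_sum_cong[THEN iffD1, rotated]) (simp add: assms(4))
  \<comment> \<open>No summability of c is needed: if measure M B = 0 both sides vanish.\<close>
  then show ?thesis
    by (metis infsumI infsum_cmult_left')
qed

lemma set_integral_indicator_eq_measure:
  assumes "B \<in> sets M"
  shows "(LINT x:B|M. indicator A x) = measure M (B \<inter> A)"
proof -
  have "B \<inter> A \<inter> space M = B \<inter> A"
    using sets.sets_into_space[OF assms] by blast
  then show ?thesis
    by (simp add: set_lebesgue_integral_def indicator_inter_arith[symmetric])
qed

lemma (in finite_measure_subalgebra) measure_Int_eq_if_cond_exp_const: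
  assumes A: "A \<in> sets M" and B: "B \<in> sets F"
    and const: "AE \<omega> in M. \<omega> \<in> B \<longrightarrow> real_cond_exp M F (indicator A) \<omega> = c"
  shows "measure M (B \<inter> A) = c * measure M B"
proof -
  have B_M: "B \<in> sets M"
    using B subalg by (auto simp: subalgebra_def)
  have "measure M (B \<inter> A) = (LINT \<omega>:B|M. indicator A \<omega>)"
    using B_M by (simp add: set_integral_indicator_eq_measure)
  also have "\<dots> = (LINT \<omega>:B|M. real_cond_exp M F (indicator A) \<omega>)"
    using A B by (intro real_cond_exp_intA) (auto simp: emeasure_finite less_top[symmetric])
  also have "\<dots> = (LINT \<omega>:B|M. c)"
    using B_M const by (intro set_lebesgue_integral_cong_AE) auto
  also have "\<dots> = c * measure M B"
    using B_M by (simp add: set_integral_const)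
  finally show ?thesis .
qed

lemma (in finite_measure_subalgebra) real_cond_exp_indicator_eq_by_strata:
  fixes Y :: "'a \<Rightarrow> 'b" and g :: "'b \<Rightarrow> real"
  assumes Y: "Y \<in> measurable F (count_space UNIV)"
    and I: "finite I" "\<And>\<omega>. \<omega> \<in> space M \<Longrightarrow> Y \<omega> \<in> I"
    and A: "A \<in> sets M"
    and strata: "\<And>B i. B \<in> sets F \<Longrightarrow> B \<subseteq> Y -` {i} \<Longrightarrow> measure M (B \<inter> A) = g i * measure M B"
  shows "AE \<omega> in M. real_cond_exp M F (indicator A) \<omega> = g (Y \<omega>)"
proof (rule real_cond_exp_charact)
  have space_F: "space F = space M"
    using subalg by (simp add: subalgebra_def)
  show gY_F: "(\<lambda>\<omega>. g (Y \<omega>)) \<in> borel_measurable F"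
    using measurable_comp[OF Y, of g borel] by (simp add: comp_def)
  show int_gY: "integrable M (\<lambda>\<omega>. g (Y \<omega>))"
  proof (rule integrable_const_bound[where B="\<Sum>i\<in>I. \<bar>g i\<bar>"])
    show "AE \<omega> in M. norm (g (Y \<omega>)) \<le> (\<Sum>i\<in>I. \<bar>g i\<bar>)"
      using I by (intro AE_I2) (auto intro: member_le_sum[where f="\<lambda>i. \<bar>g i\<bar>"])
    show "(\<lambda>\<omega>. g (Y \<omega>)) \<in> borel_measurable M"
      using gY_F subalg by (rule measurable_from_subalg[rotated])
  qed
  show int_A: "integrable M (indicator A :: 'a \<Rightarrow> real)"
    using A by (simp add: emeasure_finite less_top[symmetric])
  fix B assume B: "B \<in> sets F"
  define C where "C i = B \<inter> (Y -` {i} \<inter> space F)" for i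
  have C_F: "C i \<in> sets F" for i
    unfolding C_def by (intro sets.Int B measurable_sets[OF Y]) simp
  then have C_M: "C i \<in> sets M" for i
    using subalg by (auto simp: subalgebra_def)
  have B_eq: "B = (\<Union>i\<in>I. C i)"
    using sets.sets_into_space[OF B] I(2) space_F by (auto simp: C_def)
  have disj: "disjoint_family_on C I"
    by (auto simp: disjoint_family_on_def C_def)
  have split: "(LINT \<omega>:B|M. f \<omega>) = (\<Sum>i\<in>I. LINT \<omega>:C i|M. f \<omega>)"
    if "integrable M f" for f :: "'a \<Rightarrow> real"
    unfolding B_eq using I(1) disj C_M that
    by (intro set_integral_finite_Union) (auto simp only: set_integrable_def intro: integrable_mult_indicator)
  have "(LINT \<omega>:B|M. indicator A \<omega>) = (\<Sum>i\<in>I. LINT \<omega>:C i|M. indicator A \<omega> :: real)"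
    using int_A by (rule split)
  also have "\<dots> = (\<Sum>i\<in>I. LINT \<omega>:C i|M. g (Y \<omega>))"
  proof (rule sum.cong)
    fix i
    have "(LINT \<omega>:C i|M. indicator A \<omega>) = measure M (C i \<inter> A)"
      using C_M by (rule set_integral_indicator_eq_measure)
    also have "\<dots> = g i * measure M (C i)"
      using C_F by (rule strata) (auto simp: C_def)
    also have "\<dots> = (LINT \<omega>:C i|M. g i)"
      using C_M by (simp add: set_integral_const)
    also have "\<dots> = (LINT \<omega>:C i|M. g (Y \<omega>))"
      using C_M by (intro set_lebesgue_integral_cong) (auto simp: C_def)
    finally show "(LINT \<omega>:C i|M. indicator A \<omega>) = (LINT \<omega>:C i|M. g (Y \<omega>))" .
  qed simp
  also have "\<dots> = (LINT \<omega>:B|M. g (Y \<omega>))"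
    using int_gY by (rule split[symmetric])
  finally show "(LINT \<omega>:B|M. indicator A \<omega>) = (LINT \<omega>:B|M. g (Y \<omega>))" .
qed

lemma subalgebra_hist_alg:
  fixes J :: "nat \<Rightarrow> 'a \<Rightarrow> 'b::countable" and T :: "nat \<Rightarrow> 'a \<Rightarrow> 'c::countable"
  assumes [measurable]: "\<And>i. J i \<in> measurable M (count_space UNIV)"
    "\<And>i. T i \<in> measurable M (count_space UNIV)"
  shows "subalgebra M (hist_alg M J T n)"
proof -
  define h where "h = (\<lambda>\<omega>. (map (\<lambda>i. J i \<omega>) [0..<Suc n], map (\<lambda>i. T i \<omega>) [0..<Suc n]))"
  have "h \<in> measurable M (count_space UNIV)"
    unfolding measurable_count_space_eq2_countable
  proof (intro conjI ballI)
    show "h \<in> space M \<rightarrow> UNIV" by simp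
    fix a :: "'b list \<times> 'c list"
    obtain js ts where a: "a = (js, ts)" by (cases a)
    have "h -` {a} \<inter> space M = {\<omega>\<in>space M. length js = Suc n \<and> length ts = Suc n \<and>
        (\<forall>i<Suc n. J i \<omega> = js!i) \<and> (\<forall>i<Suc n. T i \<omega> = ts!i)}"
      unfolding h_def a by (auto simp: list_eq_iff_nth_eq simp del: upt_Suc)
    also have "\<dots> \<in> sets M" by measurable
    finally show "h -` {a} \<inter> space M \<in> sets M" .
  qed
  then show ?thesis
    unfolding subalgebra_def hist_alg_def h_def[symmetric]
    by (auto simp: sets_vimage_algebra2 measurable_sets)
qed

lemma measurable_hist_alg:
  assumes "i \<le> n"
  shows "J i \<in> measurable (hist_alg M J T n) (count_space UNIV)"
proof -
  define h where "h = (\<lambda>\<omega>. (map (\<lambda>i. J i \<omega>) [0..<Suc n], map (\<lambda>i. T i \<omega>) [0..<Suc n]))"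
  have "h \<in> measurable (hist_alg M J T n) (count_space UNIV)"
    unfolding hist_alg_def h_def[symmetric] by (rule measurable_vimage_algebra1) simp
  then have "(\<lambda>p. fst p ! i) \<circ> h \<in> measurable (hist_alg M J T n) (count_space UNIV)"
    by (rule measurable_comp) simp
  moreover have "(\<lambda>p. fst p ! i) \<circ> h = J i"
    using assms by (auto simp: h_def simp del: upt_Suc)
  ultimately show ?thesis
    by simp
qed

lemma sets_hist_alg_mono:
  assumes determined: "\<And>\<omega> \<omega>'. \<omega> \<in> space M \<Longrightarrow> \<omega>' \<in> space M \<Longrightarrow> \<forall>i\<le>n. T i \<omega> = T i \<omega>'
    \<Longrightarrow> \<forall>i\<le>n. T' i \<omega> = T' i \<omega>'"
  shows "sets (hist_alg M J T' n) \<subseteq> sets (hist_alg M J T n)"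
proof
  define h where "h = (\<lambda>\<omega>. (map (\<lambda>i. J i \<omega>) [0..<Suc n], map (\<lambda>i. T i \<omega>) [0..<Suc n]))"
  define h' where "h' = (\<lambda>\<omega>. (map (\<lambda>i. J i \<omega>) [0..<Suc n], map (\<lambda>i. T' i \<omega>) [0..<Suc n]))"
  have sets_h: "sets (hist_alg M J T n) = {h -` C \<inter> space M |C. C \<in> sets (count_space UNIV)}"
    unfolding hist_alg_def h_def[symmetric] by (rule sets_vimage_algebra2) simp
  have sets_h': "sets (hist_alg M J T' n) = {h' -` C \<inter> space M |C. C \<in> sets (count_space UNIV)}"
    unfolding hist_alg_def h'_def[symmetric] by (rule sets_vimage_algebra2) simp
  have h'_eq: "h' \<omega> = h' \<omega>'" if "\<omega> \<in> space M" "\<omega>' \<in> space M" "h \<omega> = h \<omega>'" for \<omega> \<omega>'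
  proof -
    from that(3) have "\<forall>i\<le>n. J i \<omega> = J i \<omega>'" "\<forall>i\<le>n. T i \<omega> = T i \<omega>'"
      by (simp_all add: h_def less_Suc_eq_le del: upt_Suc)
    moreover from this(2) have "\<forall>i\<le>n. T' i \<omega> = T' i \<omega>'"
      by (rule determined[OF that(1,2)])
    ultimately show ?thesis
      by (simp add: h'_def less_Suc_eq_le del: upt_Suc)
  qed
  fix B assume "B \<in> sets (hist_alg M J T' n)"
  then obtain C where B: "B = h' -` C \<inter> space M"
    using sets_h' by blast
  have "B = h -` (h ` B) \<inter> space M"
  proof (intro equalityI subsetI)
    fix \<omega> assume \<omega>: "\<omega> \<in> h -` (h ` B) \<inter> space M"
    then obtain \<omega>' where \<omega>': "\<omega>' \<in> B" "h \<omega> = h \<omega>'"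
      by auto
    then have "\<omega>' \<in> space M" "h' \<omega>' \<in> C"
      by (simp_all add: B)
    moreover have "h' \<omega> = h' \<omega>'"
      using \<omega> \<omega>' \<open>\<omega>' \<in> space M\<close> by (intro h'_eq) auto
    ultimately show "\<omega> \<in> B"
      using \<omega> by (simp add: B)
  next
    fix \<omega> assume "\<omega> \<in> B"
    moreover have "B \<subseteq> space M"
      by (simp add: B)
    ultimately show "\<omega> \<in> h -` (h ` B) \<inter> space M"
      by auto
  qed
  then show "B \<in> sets (hist_alg M J T n)"
    unfolding sets_h by (intro CollectI exI[of _ "h ` B"]) simp
qed

lemma phi_time_Suc_minus:
  "phi_time \<phi> S (Suc n) \<omega> - phi_time \<phi> S n \<omega> = \<phi> (S (Suc n) \<omega> - S n \<omega>)"
  by (simp add: phi_time_def sojourn_def)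

lemma phi_time_cong:
  assumes "\<forall>i\<le>n. S i \<omega> = S i \<omega>'"
  shows "\<forall>i\<le>n. phi_time \<phi> S i \<omega> = phi_time \<phi> S i \<omega>'"
  unfolding phi_time_def sojourn_def using assms by (auto intro!: sum.cong)

lemma sets_hist_alg_phi_time:
  "sets (hist_alg M J (phi_time \<phi> S) n) \<subseteq> sets (hist_alg M J S n)"
  by (rule sets_hist_alg_mono, rule phi_time_cong)

lemma multi_time_MRC_measurable:
  assumes "multi_time_MRC M s q J S"
  shows "J i \<in> M \<rightarrow>\<^sub>M count_space UNIV" "S i \<in> M \<rightarrow>\<^sub>M count_space UNIV"
  using assms by (simp_all add: multi_time_MRC_def)

lemma multi_time_MRC_finite_measure_subalgebra:
  assumes mrc: "multi_time_MRC M s q J S"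
    and F: "sets F \<subseteq> sets (hist_alg M J S n)" "space F = space M"
  shows "finite_measure_subalgebra M F"
proof -
  interpret prob_space M
    using mrc by (simp add: multi_time_MRC_def)
  have "subalgebra M (hist_alg M J S n)"
    using multi_time_MRC_measurable[OF mrc] by (intro subalgebra_hist_alg)
  then show ?thesis
    using F by unfold_locales (auto simp: subalgebra_def)
qed

lemma multi_time_MRC_measure_Int:
  assumes mrc: "multi_time_MRC M s q J S" and "j \<in> {1..s}"
    and B: "B \<in> sets (hist_alg M J S n)" "B \<subseteq> J n -` {i}"
  shows "measure M (B \<inter> {\<omega>\<in>space M. J (Suc n) \<omega> = j \<and> S (Suc n) \<omega> - S n \<omega> = v})
    = q i j v * measure M B"
proof -
  define A where "A = {\<omega>\<in>space M. J (Suc n) \<omega> = j \<and> S (Suc n) \<omega> - S n \<omega> = v}"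
  interpret F: finite_measure_subalgebra M "hist_alg M J S n"
    by (rule multi_time_MRC_finite_measure_subalgebra[OF mrc order.refl]) (simp add: hist_alg_def)
  note [measurable] = multi_time_MRC_measurable[OF mrc]
  have "AE \<omega> in M. real_cond_exp M (hist_alg M J S n) (indicator A) \<omega> = q (J n \<omega>) j v"
    using mrc \<open>j \<in> {1..s}\<close> by (simp add: multi_time_MRC_def A_def)
  then have "AE \<omega> in M. \<omega> \<in> B \<longrightarrow> real_cond_exp M (hist_alg M J S n) (indicator A) \<omega> = q i j v"
    using B(2) by (auto elim!: eventually_mono)
  moreover have "A \<in> sets M"
    unfolding A_def by measurable
  ultimately show ?thesis
    unfolding A_def[symmetric] using B(1) by (intro F.measure_Int_eq_if_cond_exp_const)
qed

lemma multi_time_MRC_measure_Int_phi: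
  assumes mrc: "multi_time_MRC M s q J S" and j: "j \<in> {1..s}"
    and B: "B \<in> sets (hist_alg M J S n)" "B \<subseteq> J n -` {i}"
  shows "measure M (B \<inter> {\<omega>\<in>space M. J (Suc n) \<omega> = j \<and> \<phi> (S (Suc n) \<omega> - S n \<omega>) = k})
    = phi_kernel q \<phi> i j k * measure M B"
proof -
  define A where "A v = {\<omega>\<in>space M. J (Suc n) \<omega> = j \<and> S (Suc n) \<omega> - S n \<omega> = v}" for v
  interpret F: finite_measure_subalgebra M "hist_alg M J S n"
    by (rule multi_time_MRC_finite_measure_subalgebra[OF mrc order.refl]) (simp add: hist_alg_def)
  note [measurable] = multi_time_MRC_measurable[OF mrc]
  have A_sets: "A v \<in> sets M" for v
    unfolding A_def by measurable
  have event_eq: "{\<omega>\<in>space M. J (Suc n) \<omega> = j \<and> \<phi> (S (Suc n) \<omega> - S n \<omega>) = k}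
      = (\<Union>v\<in>{v. \<phi> v = k}. A v)"
    by (auto simp: A_def)
  have "B \<in> sets M"
    using B(1) F.subalg by (auto simp: subalgebra_def)
  then show ?thesis
    unfolding event_eq phi_kernel_def using A_sets multi_time_MRC_measure_Int[OF mrc j B]
    by (intro F.measure_Int_UN_eq_infsum) (auto simp: disjoint_family_on_def A_def)
qed

lemma multi_time_MRC_real_cond_exp_phi:
  assumes mrc: "multi_time_MRC M s q J S" and j: "j \<in> {1..s}"
  shows "AE \<omega> in M. real_cond_exp M (hist_alg M J (phi_time \<phi> S) n)
      (indicator {\<omega>\<in>space M. J (Suc n) \<omega> = j \<and> \<phi> (S (Suc n) \<omega> - S n \<omega>) = k}) \<omega>
    = phi_kernel q \<phi> (J n \<omega>) j k"
proof -
  interpret F': finite_measure_subalgebra M "hist_alg M J (phi_time \<phi> S) n"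
    using mrc sets_hist_alg_phi_time
    by (rule multi_time_MRC_finite_measure_subalgebra) (simp add: hist_alg_def)
  note [measurable] = multi_time_MRC_measurable[OF mrc]
  show ?thesis
  proof (rule F'.real_cond_exp_indicator_eq_by_strata[where I="{1..s}"])
    show "J n \<in> hist_alg M J (phi_time \<phi> S) n \<rightarrow>\<^sub>M count_space UNIV"
      by (rule measurable_hist_alg) simp
    show "{\<omega>\<in>space M. J (Suc n) \<omega> = j \<and> \<phi> (S (Suc n) \<omega> - S n \<omega>) = k} \<in> sets M"
      by measurable
    fix B i assume "B \<in> sets (hist_alg M J (phi_time \<phi> S) n)" "B \<subseteq> J n -` {i}"
    then show "measure M (B \<inter> {\<omega>\<in>space M. J (Suc n) \<omega> = j \<and> \<phi> (S (Suc n) \<omega> - S n \<omega>) = k})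
        = phi_kernel q \<phi> i j k * measure M B"
      using sets_hist_alg_phi_time[of M J \<phi> S n]
      by (intro multi_time_MRC_measure_Int_phi[OF mrc j]) auto
  qed (use mrc in \<open>auto simp: multi_time_MRC_def\<close>)
qed

theorem proposition6:
  fixes M :: "'a measure" and s :: nat
    and q :: "nat \<Rightarrow> nat \<Rightarrow> ('d::finite \<Rightarrow> nat) \<Rightarrow> real"
    and J :: "nat \<Rightarrow> 'a \<Rightarrow> nat" and S :: "nat \<Rightarrow> 'a \<Rightarrow> ('d \<Rightarrow> nat)"
    and \<phi> :: "('d \<Rightarrow> nat) \<Rightarrow> nat"
  assumes "multi_time_MRC M s q J S"
  shows "\<forall>n j k. j \<in> {1..s} \<longrightarrow>
           (AE \<omega> in M. real_cond_exp M (hist_alg M J (phi_time \<phi> S) n)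
              (indicator {\<omega>\<in>space M. J (Suc n) \<omega> = j \<and>
                  phi_time \<phi> S (Suc n) \<omega> - phi_time \<phi> S n \<omega> = k}) \<omega>
            = phi_kernel q \<phi> (J n \<omega>) j k)"
  unfolding phi_time_Suc_minus using multi_time_MRC_real_cond_exp_phi[OF assms] by blast

end
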